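(* Let $G$ and $H$ be Hilbert spaces, let $S:G\to H$ be a linear isomorphism, and let $F\subset G$ be a quasi-normed space such that the embedding $F\hookrightarrow G$ is compact. Then for all $C\ge1$ and all $n\in\mathbb N$, $$ e^{\rm cont}_{4n+1}(S,F,H)\le 2C\,\|S\|^2\,\|S^{-1}\|^2\, e^{\rm non}_{n,C}(S,F,H). $$
   Context: For a map $S_n:F\to H$, $e(S_n,F,H)=\sup_{\|f\|_F\le1}\|Sf-S_n(f)\|_H$. Manifold widths: $e^{\rm cont}_n(S,F,H)=\inf e(\varphi_n\circ N_n,F,H)$ over all continuous $N_n:F\to\mathbb R^n$ and continuous $\varphi_n:\mathbb R^n\to H$. A sequence $\mathcal B=\{h_1,h_2,\dots\}\subset H$ is a Riesz basis if finite linear combinations are dense and $A(\sum|\alpha_k|^2)^{1/2}\le\|\sum\alpha_kh_k\|_H\le B(\sum|\alpha_k|^2)^{1/2}$ for all finitely supported sequences, with $A,B$ the optimal constants; $\mathcal B_C$ is the set of Riesz bases of $H$ with $B/A\le C$. $\sigma_n(u,\mathcal B)_H=\inf_{i_1,\dots,i_n}\inf_{c_1,\dots,c_n}\|u-\sum_{k=1}^nc_kh_{i_k}\|_H$. Nonlinear widths: $e^{\rm non}_{n,C}(S,F,H)=\inf_{\mathcal B\in\mathcal B_C}\sup_{\|f\|_F\le1}\sigma_n(Sf,\mathcal B)_H$ (equivalently, infimum over $\mathcal B\in\mathcal B_C$ and over arbitrary maps $S_n(f)=\sum_{k=1}^nc_kh_{i_k}$ with $c_k,i_k$ depending arbitrarily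 on $f$, of $e(S_n,F,H)$). *)

theory Defs
  imports "HOL-Analysis.Analysis"
begin

text \<open>Quasi-normed subspace F of G with quasi-norm qn (only its values on F matter).\<close>
definition is_quasinormed_subspace :: "'g::real_vector set \<Rightarrow> ('g \<Rightarrow> real) \<Rightarrow> bool" where
  "is_quasinormed_subspace F qn \<longleftrightarrow>
     subspace F \<and>
     (\<forall>x\<in>F. qn x \<ge> 0) \<and>
     (\<forall>x\<in>F. qn x = 0 \<longleftrightarrow> x = 0) \<and>
     (\<forall>c. \<forall>x\<in>F. qn (c *\<^sub>R x) = \<bar>c\<bar> * qn x) \<and>
     (\<exists>K\<ge>1. \<forall>x\<in>F. \<forall>y\<in>F. qn (x + y) \<le> K * (qn x + qn y))"

definition unit_ball_F :: "'g set \<Rightarrow> ('g \<Rightarrow> real) \<Rightarrow> 'g set" where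
  "unit_ball_F F qn = {f \<in> F. qn f \<le> 1}"

definition compact_embedding :: "'g::metric_space set \<Rightarrow> ('g \<Rightarrow> real) \<Rightarrow> bool" where
  "compact_embedding F qn \<longleftrightarrow> compact (closure (unit_ball_F F qn))"

text \<open>R^m is represented by the vectors x :: nat => real with x i = 0 for i >= m,
  with the Euclidean norm.\<close>
definition Rvecs :: "nat \<Rightarrow> (nat \<Rightarrow> real) set" where
  "Rvecs m = {x. \<forall>i\<ge>m. x i = 0}"

definition Rnorm :: "nat \<Rightarrow> (nat \<Rightarrow> real) \<Rightarrow> real" where
  "Rnorm m x = sqrt (\<Sum>i<m. (x i)\<^sup>2)"

definition cont_F_Rm :: "'g::real_vector set \<Rightarrow> ('g \<Rightarrow> real) \<Rightarrow> nat \<Rightarrow> ('g \<Rightarrow> (nat \<Rightarrow> real)) \<Rightarrow> bool" where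
  "cont_F_Rm F qn m N \<longleftrightarrow> (\<forall>x\<in>F. N x \<in> Rvecs m) \<and>
     (\<forall>x\<in>F. \<forall>\<epsilon>>0. \<exists>\<delta>>0. \<forall>y\<in>F. qn (y - x) < \<delta> \<longrightarrow> Rnorm m (N y - N x) < \<epsilon>)"

definition cont_Rm_H :: "nat \<Rightarrow> ((nat \<Rightarrow> real) \<Rightarrow> 'h::real_normed_vector) \<Rightarrow> bool" where
  "cont_Rm_H m \<phi> \<longleftrightarrow>
     (\<forall>x\<in>Rvecs m. \<forall>\<epsilon>>0. \<exists>\<delta>>0. \<forall>y\<in>Rvecs m. Rnorm m (y - x) < \<delta> \<longrightarrow> norm (\<phi> y - \<phi> x) < \<epsilon>)"

definition err :: "('g \<Rightarrow> 'h::real_normed_vector) \<Rightarrow> ('g \<Rightarrow> 'h) \<Rightarrow> 'g set \<Rightarrow> ('g \<Rightarrow> real) \<Rightarrow> ereal" where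
  "err S Sn F qn = (SUP f\<in>unit_ball_F F qn. ereal (norm (S f - Sn f)))"

definition e_cont :: "nat \<Rightarrow> ('g::real_vector \<Rightarrow> 'h::real_normed_vector) \<Rightarrow> 'g set \<Rightarrow> ('g \<Rightarrow> real) \<Rightarrow> ereal" where
  "e_cont m S F qn = (INF (N, \<phi>)\<in>{(N, \<phi>). cont_F_Rm F qn m N \<and> cont_Rm_H m \<phi>}. err S (\<phi> \<circ> N) F qn)"

definition riesz_ratios :: "(nat \<Rightarrow> 'h::real_normed_vector) \<Rightarrow> real set" where
  "riesz_ratios h = {norm (\<Sum>k\<in>I. a k *\<^sub>R h k) / sqrt (\<Sum>k\<in>I. (a k)\<^sup>2) | a I.
      finite I \<and> (\<exists>k\<in>I. a k \<noteq> 0)}"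

definition riesz_A :: "(nat \<Rightarrow> 'h::real_normed_vector) \<Rightarrow> real" where
  "riesz_A h = Inf (riesz_ratios h)"

definition riesz_B :: "(nat \<Rightarrow> 'h::real_normed_vector) \<Rightarrow> real" where
  "riesz_B h = Sup (riesz_ratios h)"

definition is_riesz_basis :: "(nat \<Rightarrow> 'h::real_normed_vector) \<Rightarrow> bool" where
  "is_riesz_basis h \<longleftrightarrow> closure (span (range h)) = UNIV \<and>
     bdd_above (riesz_ratios h) \<and> riesz_A h > 0"

definition riesz_bases_C :: "real \<Rightarrow> (nat \<Rightarrow> 'h::real_normed_vector) set" where
  "riesz_bases_C C = {h. is_riesz_basis h \<and> riesz_B h / riesz_A h \<le> C}"

definition sigma_n :: "nat \<Rightarrow> (nat \<Rightarrow> 'h::real_normed_vector) \<Rightarrow> 'h \<Rightarrow> real" where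
  "sigma_n n h u = Inf {norm (u - (\<Sum>k<n. c k *\<^sub>R h (i k))) | c i. True}"

definition e_non :: "nat \<Rightarrow> real \<Rightarrow> ('g \<Rightarrow> 'h::real_normed_vector) \<Rightarrow> 'g set \<Rightarrow> ('g \<Rightarrow> real) \<Rightarrow> ereal" where
  "e_non n C S F qn = (INF h\<in>riesz_bases_C C. SUP f\<in>unit_ball_F F qn. ereal (sigma_n n h (S f)))"

end

theory Submission
  imports Defs "HOL-Computational_Algebra.Polynomial"
begin

text \<open>
  Take a Riesz basis \<open>h\<close> with \<open>B/A \<le> C\<close> that nearly attains the nonlinear width. Since the unit ball
  of \<open>F\<close> is relatively compact in \<open>G\<close>, finitely many \<open>n\<close>-term approximations serve all of
  \<open>S(B_F)\<close> up to an arbitrarily small loss, so only basis vectors \<open>h k\<close> with \<open>k\<close> in a finite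
  set \<open>J\<close> matter. Project \<open>S f\<close> orthogonally onto their span and soft-threshold the coefficients at
  their \<open>(2n+1)\<close>-st largest modulus. The resulting coefficient vector \<open>a f\<close> is \<open>2n\<close>-sparse,
  Lipschitz in \<open>f\<close>, and by the Riesz bounds approximates \<open>S f\<close> within \<open>sqrt 2 * C\<close> times the
  best \<open>n\<close>-term error. As encoder take the power moments \<open>\<Sum>k. a f k * k^j\<close>, \<open>j \<le> 4n\<close>:
  differences of \<open>2n\<close>-sparse vectors are \<open>4n\<close>-sparse, so by a Vandermonde argument \<open>a f\<close> is a
  Lipschitz function of the moments, and its McShane extension is a continuous decoder.
  This gives the sharper bound \<open>e_cont (4n+1) \<le> sqrt 2 * C * e_non\<close>; the stated one follows
  from \<open>\<parallel>S\<parallel> \<parallel>S\<inverse>\<parallel> \<ge> 1\<close>, where boundedness of \<open>S\<inverse>\<close> is the bounded inverse theorem.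
\<close>

section \<open>Bounded inverse theorem\<close>

lemma Cauchy_partial_sums_if_summable_norm:
  fixes f :: "nat \<Rightarrow> 'a::real_normed_vector"
  assumes "summable (\<lambda>n. norm (f n))"
  shows "Cauchy (\<lambda>n. \<Sum>i<n. f i)"
proof (rule metric_CauchyI)
  fix e :: real assume "e > 0"
  then obtain N where N: "\<And>m n. m \<ge> N \<Longrightarrow> norm (\<Sum>i\<in>{m..<n}. norm (f i)) < e"
    using assms unfolding summable_Cauchy by blast
  have close: "dist (\<Sum>i<m. f i) (\<Sum>i<n. f i) < e" if "N \<le> m" "m \<le> n" for m n
  proof -
    have "(\<Sum>i<n. f i) - (\<Sum>i<m. f i) = (\<Sum>i\<in>{m..<n}. f i)"
      using that by (simp add: atLeast0LessThan[symmetric] sum_diff_nat_ivl)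
    then have "dist (\<Sum>i<m. f i) (\<Sum>i<n. f i) = norm (\<Sum>i\<in>{m..<n}. f i)"
      by (simp add: dist_norm norm_minus_commute[of "sum f {..<m}"])
    also have "\<dots> \<le> (\<Sum>i\<in>{m..<n}. norm (f i))"
      by (rule norm_sum)
    also have "\<dots> < e"
      using N[OF \<open>N \<le> m\<close>, of n] by simp
    finally show ?thesis .
  qed
  show "\<exists>M. \<forall>m\<ge>M. \<forall>n\<ge>M. dist (\<Sum>i<m. f i) (\<Sum>i<n. f i) < e"
    by (metis close dist_commute nat_le_linear)
qed

lemma series_converges_if_geometric_bound:
  fixes x :: "nat \<Rightarrow> 'a::{real_normed_vector,complete_space}"
  assumes bound: "\<And>i. norm (x i) \<le> K * (1/2)^i"
  obtains s where "(\<lambda>n. \<Sum>i<n. x i) \<longlonglongrightarrow> s" and "norm s \<le> 2 * K"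
proof -
  have geometric: "summable (\<lambda>i. K * (1/2::real)^i)"
    by (intro summable_mult summable_geometric) simp
  then have "summable (\<lambda>i. norm (x i))"
    using bound by (intro summable_comparison_test[OF _ geometric]) simp
  then obtain s where s: "(\<lambda>n. \<Sum>i<n. x i) \<longlonglongrightarrow> s"
    using Cauchy_partial_sums_if_summable_norm Cauchy_convergent convergent_def by blast
  moreover have "norm s \<le> 2 * K"
  proof (rule LIMSEQ_le_const2[OF tendsto_norm[OF s]], intro exI allI impI)
    fix n
    have "norm (\<Sum>i<n. x i) \<le> (\<Sum>i<n. K * (1/2)^i)"
      using bound by (intro order_trans[OF norm_sum] sum_mono)
    also have "\<dots> \<le> (\<Sum>i. K * (1/2)^i)"
      using order_trans[OF norm_ge_zero bound[of 0]] by (intro sum_le_suminf[OF geometric]) auto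
    also have "\<dots> = 2 * K"
      using suminf_mult[OF summable_geometric[of "1/2::real"], of K] suminf_geometric[of "1/2::real"]
      by simp
    finally show "norm (\<Sum>i<n. x i) \<le> 2 * K" .
  qed
  ultimately show thesis
    using that by blast
qed

lemma exact_preimage_if_approx_preimage:
  fixes S :: "'a::{real_normed_vector,complete_space} \<Rightarrow> 'b::real_normed_vector"
  assumes S: "bounded_linear S" and "M \<ge> 0"
    and approx: "\<And>y. \<exists>x. norm x \<le> M * norm y \<and> norm (y - S x) \<le> norm y / 2"
  shows "\<exists>x. S x = y \<and> norm x \<le> 2 * M * norm y"
proof -
  interpret S: bounded_linear S by fact
  obtain pick where pick_norm: "\<And>y. norm (pick y) \<le> M * norm y"
    and pick_residual: "\<And>y. norm (y - S (pick y)) \<le> norm y / 2"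
    using approx by metis
  define z where "z = rec_nat y (\<lambda>_ z. z - S (pick z))"
  define x where "x n = pick (z n)" for n
  have z_Suc: "z (Suc n) = z n - S (x n)" for n
    by (simp add: z_def x_def)
  have z_bound: "norm (z n) \<le> norm y * (1/2)^n" for n
  proof (induction n)
    case (Suc n)
    then show ?case
      using pick_residual[of "z n"] by (simp add: z_Suc x_def)
  qed (simp add: z_def)
  have "norm (x n) \<le> M * norm y * (1/2)^n" for n
    using order_trans[OF pick_norm mult_left_mono[OF z_bound \<open>M \<ge> 0\<close>]]
    by (simp add: x_def mult.assoc)
  then obtain s where s: "(\<lambda>n. \<Sum>i<n. x i) \<longlonglongrightarrow> s" and "norm s \<le> 2 * (M * norm y)"
    by (rule series_converges_if_geometric_bound)
  have "(\<lambda>n. norm y * (1/2::real)^n) \<longlonglongrightarrow> 0"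
    by (intro tendsto_mult_right_zero LIMSEQ_power_zero) simp
  then have "z \<longlonglongrightarrow> 0"
    by (rule Lim_null_comparison[rotated]) (use z_bound in \<open>intro always_eventually allI\<close>)
  moreover have "S (\<Sum>i<n. x i) = y - z n" for n
    by (induction n) (simp_all add: z_Suc S.add, simp add: z_def)
  ultimately have "(\<lambda>n. S (\<Sum>i<n. x i)) \<longlonglongrightarrow> y"
    using tendsto_diff[OF tendsto_const, of z 0 _ y] by simp
  then have "S s = y"
    using S.tendsto[OF s] LIMSEQ_unique by blast
  with \<open>norm s \<le> 2 * (M * norm y)\<close> show ?thesis
    by auto
qed

lemma surj_bounded_linear_closure_image_cball_contains_ball:
  fixes S :: "'a::real_normed_vector \<Rightarrow> 'b::{real_normed_vector,complete_space}"
  assumes "bounded_linear S" and "surj S"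
  obtains k y0 r where "k \<ge> 0" "r > 0" "ball y0 r \<subseteq> closure (S ` cball 0 k)"
proof -
  define Cl where "Cl k = closure (S ` cball 0 (real k))" for k :: nat
  have "y \<in> (\<Union>k. Cl k)" for y
  proof -
    obtain x where "y = S x"
      using \<open>surj S\<close> by (metis surj_def)
    moreover obtain k :: nat where "norm x \<le> real k"
      using real_arch_simple by blast
    ultimately show ?thesis
      unfolding Cl_def using closure_subset by fastforce
  qed
  then have cover: "(\<Union>k. Cl k) = UNIV"
    by blast
  have "\<exists>k. interior (Cl k) \<noteq> {}"
  proof (rule ccontr)
    assume "\<not> ?thesis"
    then have "euclidean interior_of (\<Union>(range Cl)) = {}"
      by (intro Baire_category_alt)
        (auto simp: completely_metrizable_space_euclidean Cl_def euclidean_interior_of)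
    then show False
      using cover by (simp add: euclidean_interior_of)
  qed
  then obtain k y0 r where "r > 0" "ball y0 r \<subseteq> Cl k"
    by (meson all_not_in_conv interior_subset open_contains_ball_eq open_interior subset_trans)
  then show thesis
    by (intro that[of "real k" r y0]) (simp_all add: Cl_def)
qed

lemma surj_bounded_linear_dense_image_of_ball:
  fixes S :: "'a::real_normed_vector \<Rightarrow> 'b::{real_normed_vector,complete_space}"
  assumes "bounded_linear S" and "surj S"
  obtains k r where "k \<ge> 0" "r > 0"
    "\<And>y e. norm y < r \<Longrightarrow> e > 0 \<Longrightarrow> \<exists>x. norm x \<le> k \<and> norm (y - S x) < e"
proof -
  interpret S: bounded_linear S by fact
  obtain k y0 r where "k \<ge> 0" "r > 0" and ball: "ball y0 r \<subseteq> closure (S ` cball 0 k)"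
    by (rule surj_bounded_linear_closure_image_cball_contains_ball[OF assms])
  have dense: "\<exists>x. norm x \<le> 2 * k \<and> norm (y - S x) < e" if "norm y < r" "e > 0" for y e
  proof -
    have near: "\<exists>x. norm x \<le> k \<and> dist (S x) z < e/2" if z: "z \<in> ball y0 r" for z
    proof -
      obtain w where "w \<in> S ` cball 0 k" "dist w z < e/2"
        using subsetD[OF ball z] \<open>e > 0\<close> unfolding closure_approachable by (meson half_gt_zero)
      then show ?thesis by auto
    qed
    \<comment> \<open>\<open>y = (y0 + y) - y0\<close> with both points in the ball\<close>
    have "y0 + y \<in> ball y0 r" "y0 \<in> ball y0 r"
      using \<open>norm y < r\<close> \<open>r > 0\<close> by (auto simp: dist_norm)
    then obtain x1 x2 where x: "norm x1 \<le> k" "dist (S x1) (y0 + y) < e/2"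
        "norm x2 \<le> k" "dist (S x2) y0 < e/2"
      using near by blast
    have "norm (y - S (x1 - x2)) = norm ((y0 + y - S x1) - (y0 - S x2))"
      by (simp add: S.diff algebra_simps)
    also have "\<dots> < e"
      using x norm_triangle_ineq4[of "y0 + y - S x1" "y0 - S x2"]
      by (simp add: dist_norm norm_minus_commute)
    finally show ?thesis
      using x norm_triangle_ineq4[of x1 x2] by (intro exI[of _ "x1 - x2"]) auto
  qed
  show thesis
    by (rule that[of "2 * k" r]) (use \<open>k \<ge> 0\<close> \<open>r > 0\<close> dense in auto)
qed

lemma surj_bounded_linear_approx_preimage:
  fixes S :: "'a::real_normed_vector \<Rightarrow> 'b::{real_normed_vector,complete_space}"
  assumes "bounded_linear S" and "surj S"
  shows "\<exists>M\<ge>0. \<forall>y. \<exists>x. norm x \<le> M * norm y \<and> norm (y - S x) \<le> norm y / 2"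
proof -
  interpret S: bounded_linear S by fact
  obtain k r where "k \<ge> 0" "r > 0"
    and dense: "\<And>y e. norm y < r \<Longrightarrow> e > 0 \<Longrightarrow> \<exists>x. norm x \<le> k \<and> norm (y - S x) < e"
    using surj_bounded_linear_dense_image_of_ball[OF assms] by blast
  define M where "M = 2 * k / r"
  have "\<exists>x. norm x \<le> M * norm y \<and> norm (y - S x) \<le> norm y / 2" for y
  proof (cases "y = 0")
    case False
    define s where "s = r / (2 * norm y)"
    have "s > 0" "norm (s *\<^sub>R y) < r"
      using \<open>r > 0\<close> False by (simp_all add: s_def)
    then obtain x where x: "norm x \<le> k" "norm (s *\<^sub>R y - S x) < s * norm y / 2"
      using dense False by (metis divide_pos_pos mult_pos_pos zero_less_norm_iff zero_less_numeral)
    have "norm ((1/s) *\<^sub>R x) \<le> M * norm y"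
      using x \<open>s > 0\<close> \<open>r > 0\<close> False by (simp add: s_def M_def field_simps)
    moreover have "y - S ((1/s) *\<^sub>R x) = (1/s) *\<^sub>R (s *\<^sub>R y - S x)"
      using \<open>s > 0\<close> by (simp add: S.scaleR algebra_simps)
    then have "norm (y - S ((1/s) *\<^sub>R x)) = norm (s *\<^sub>R y - S x) / s"
      using \<open>s > 0\<close> by (simp only:) simp
    then have "norm (y - S ((1/s) *\<^sub>R x)) \<le> norm y / 2"
      using x(2) \<open>s > 0\<close> by (simp add: pos_divide_le_eq mult.commute)
    ultimately show ?thesis
      by blast
  qed (intro exI[of _ 0], simp)
  moreover have "M \<ge> 0"
    using \<open>k \<ge> 0\<close> \<open>r > 0\<close> by (simp add: M_def)
  ultimately show ?thesis by blast
qed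

lemma bounded_linear_inv:
  fixes S :: "'a::{real_normed_vector,complete_space} \<Rightarrow> 'b::{real_normed_vector,complete_space}"
  assumes S: "bounded_linear S" and "bij S"
  shows "bounded_linear (inv S)"
proof -
  interpret S: bounded_linear S by fact
  obtain M where "M \<ge> 0" "\<And>y. \<exists>x. norm x \<le> M * norm y \<and> norm (y - S x) \<le> norm y / 2"
    using surj_bounded_linear_approx_preimage[OF S bij_is_surj[OF \<open>bij S\<close>]] by blast
  then have bound: "norm (inv S y) \<le> 2 * M * norm y" for y
    using exact_preimage_if_approx_preimage[OF S] bij_inv_eq_iff[OF \<open>bij S\<close>] by metis
  have inv_eq: "inv S y = x \<longleftrightarrow> S x = y" for x y
    using \<open>bij S\<close> by (metis bij_inv_eq_iff)
  show ?thesis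
  proof (rule bounded_linear_intro)
    show "inv S (x + y) = inv S x + inv S y" "inv S (r *\<^sub>R x) = r *\<^sub>R inv S x" for r x y
      by (simp_all add: inv_eq S.add S.scaleR) (metis inv_eq)+
    show "norm (inv S x) \<le> norm x * (2 * M)" for x
      using bound[of x] by (simp add: mult.commute)
  qed
qed

lemma onorm_mult_onorm_inv_ge_1:
  fixes S :: "'a::{real_normed_vector,complete_space} \<Rightarrow> 'b::{real_normed_vector,complete_space}"
    and x :: 'a
  assumes S: "bounded_linear S" and "bij S" and "x \<noteq> 0"
  shows "1 \<le> onorm S * onorm (inv S)"
proof -
  have inv: "bounded_linear (inv S)"
    using bounded_linear_inv[OF assms(1,2)] .
  have "norm x = norm (inv S (S x))"
    using \<open>bij S\<close> by (simp add: bij_is_inj)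
  also have "\<dots> \<le> onorm (inv S) * (onorm S * norm x)"
    using order_trans[OF onorm[OF inv] mult_left_mono[OF onorm[OF S, of x] onorm_pos_le[OF inv]]] .
  finally show ?thesis
    using \<open>x \<noteq> 0\<close> by (simp add: algebra_simps)
qed

section \<open>Continuous encoders and decoders through power moments\<close>

lemma Rnorm_eq_L2_set: "Rnorm m x = L2_set x {..<m}"
  by (simp add: Rnorm_def L2_set_def)

lemma Rnorm_nonneg: "Rnorm m x \<ge> 0"
  by (simp add: Rnorm_eq_L2_set)

lemma Rnorm_diff_self [simp]: "Rnorm m (x - x) = 0"
  by (simp add: Rnorm_def)

lemma Rnorm_minus_commute: "Rnorm m (x - y) = Rnorm m (y - x)"
  by (simp add: Rnorm_def power2_commute)

lemma Rnorm_triangle: "Rnorm m (x - z) \<le> Rnorm m (x - y) + Rnorm m (y - z)"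
  using L2_set_triangle_ineq[of "x - y" "y - z" "{..<m}"] by (simp add: Rnorm_eq_L2_set fun_diff_def)

lemma abs_le_Rnorm: "i < m \<Longrightarrow> \<bar>x i\<bar> \<le> Rnorm m x"
  using member_le_L2_set[of "{..<m}" i "\<lambda>i. \<bar>x i\<bar>"] by (simp add: Rnorm_def L2_set_def)

lemma eps_delta_if_lipschitz:
  fixes L e :: real
  assumes "L \<ge> 0" "e > 0"
  shows "\<exists>\<delta>>0. \<forall>t. t < \<delta> \<longrightarrow> L * t < e"
proof (intro exI conjI allI impI)
  show "e / (L + 1) > 0"
    using assms by simp
  fix t assume "t < e / (L + 1)"
  then have "L * t \<le> L * (e / (L + 1))"
    using assms by (intro mult_left_mono) auto
  also have "\<dots> < e"
    using assms by (simp add: field_simps)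
  finally show "L * t < e" .
qed

lemma cont_Rm_H_if_lipschitz:
  assumes "L \<ge> 0" and "\<And>x y. norm (\<phi> y - \<phi> x) \<le> L * Rnorm m (y - x)"
  shows "cont_Rm_H m \<phi>"
  unfolding cont_Rm_H_def
  by (metis assms eps_delta_if_lipschitz order_le_less_trans)

lemma cont_F_Rm_if_lipschitz:
  assumes "L \<ge> 0" and "\<And>x. x \<in> F \<Longrightarrow> N x \<in> Rvecs m"
    and "\<And>x y. x \<in> F \<Longrightarrow> y \<in> F \<Longrightarrow> Rnorm m (N y - N x) \<le> L * qn (y - x)"
  shows "cont_F_Rm F qn m N"
  unfolding cont_F_Rm_def
  by (metis assms eps_delta_if_lipschitz order_le_less_trans)

lemma mcshane_extension:
  fixes g :: "'z \<Rightarrow> real" and p :: "'z \<Rightarrow> 'y" and d :: "'y \<Rightarrow> 'y \<Rightarrow> real"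
  assumes "Z \<noteq> {}" and "K \<ge> 0"
    and d_refl: "\<And>y. d y y = 0" and d_sym: "\<And>x y. d x y = d y x"
    and d_triangle: "\<And>x y z. d x z \<le> d x y + d y z"
    and lip: "\<And>z z'. z \<in> Z \<Longrightarrow> z' \<in> Z \<Longrightarrow> \<bar>g z - g z'\<bar> \<le> K * d (p z) (p z')"
  shows "\<exists>G. (\<forall>z\<in>Z. G (p z) = g z) \<and> (\<forall>y y'. \<bar>G y - G y'\<bar> \<le> K * d y y')"
proof -
  define G where "G y = Inf ((\<lambda>z. g z + K * d y (p z)) ` Z)" for y
  have tri: "K * d x z \<le> K * d x y + K * d y z" for x y z
    using mult_left_mono[OF d_triangle \<open>K \<ge> 0\<close>] by (simp add: distrib_left)
  obtain z0 where "z0 \<in> Z"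
    using \<open>Z \<noteq> {}\<close> by blast
  have bdd: "bdd_below ((\<lambda>z. g z + K * d y (p z)) ` Z)" for y
  proof (rule bdd_belowI2)
    fix z assume "z \<in> Z"
    show "g z0 - K * d (p z0) y \<le> g z + K * d y (p z)"
      using lip[OF \<open>z0 \<in> Z\<close> \<open>z \<in> Z\<close>] tri[where x="p z0" and y=y and z="p z"] by linarith
  qed
  have G_le: "G y \<le> g z + K * d y (p z)" if "z \<in> Z" for y z
    unfolding G_def using cInf_lower[OF imageI[OF that] bdd] .
  have G_ge: "c \<le> G y" if "\<And>z. z \<in> Z \<Longrightarrow> c \<le> g z + K * d y (p z)" for c y
    unfolding G_def using \<open>Z \<noteq> {}\<close> that by (intro cInf_greatest) auto
  have G_lip: "G y \<le> G y' + K * d y y'" for y y'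
  proof -
    have "G y - K * d y y' \<le> G y'"
    proof (rule G_ge)
      fix z assume "z \<in> Z"
      show "G y - K * d y y' \<le> g z + K * d y' (p z)"
        using G_le[OF \<open>z \<in> Z\<close>, of y] tri[where x=y and y=y' and z="p z"] by linarith
    qed
    then show ?thesis by linarith
  qed
  have "G (p z) = g z" if "z \<in> Z" for z
  proof (rule antisym)
    show "G (p z) \<le> g z"
      using G_le[OF that, of "p z"] by (simp add: d_refl)
    show "g z \<le> G (p z)"
      using lip[OF that] by (intro G_ge) (force simp: abs_le_iff)
  qed
  moreover have "\<bar>G y - G y'\<bar> \<le> K * d y y'" for y y'
    using G_lip[of y y'] G_lip[of y' y] d_sym[of y' y] by (simp add: abs_le_iff)
  ultimately show ?thesis by blast
qed

definition moments :: "nat \<Rightarrow> nat set \<Rightarrow> (nat \<Rightarrow> real) \<Rightarrow> nat \<Rightarrow> real" where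
  "moments m J a j = (if j < m then (\<Sum>k\<in>J. a k * real k ^ j) else 0)"

lemma moments_in_Rvecs: "moments m J a \<in> Rvecs m"
  by (simp add: Rvecs_def moments_def)

lemma moments_diff: "moments m J a - moments m J b = moments m J (a - b)"
  by (auto simp: moments_def fun_eq_iff sum_subtractf algebra_simps)

lemma Rnorm_moments_le:
  assumes "\<And>k. k \<in> J \<Longrightarrow> \<bar>a k\<bar> \<le> D"
  shows "Rnorm m (moments m J a) \<le> (\<Sum>j<m. \<Sum>k\<in>J. real k ^ j) * D"
proof -
  have "Rnorm m (moments m J a) \<le> (\<Sum>j<m. \<bar>moments m J a j\<bar>)"
    unfolding Rnorm_eq_L2_set by (rule L2_set_le_sum_abs)
  also have "\<dots> \<le> (\<Sum>j<m. \<Sum>k\<in>J. D * real k ^ j)"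
  proof (rule sum_mono)
    fix j assume "j \<in> {..<m}"
    then have "\<bar>moments m J a j\<bar> \<le> (\<Sum>k\<in>J. \<bar>a k\<bar> * real k ^ j)"
      using sum_abs[of "\<lambda>k. a k * real k ^ j" J] by (simp add: moments_def abs_mult)
    also have "\<dots> \<le> (\<Sum>k\<in>J. D * real k ^ j)"
      using assms by (intro sum_mono mult_right_mono) auto
    finally show "\<bar>moments m J a j\<bar> \<le> (\<Sum>k\<in>J. D * real k ^ j)" .
  qed
  also have "\<dots> = (\<Sum>j<m. \<Sum>k\<in>J. real k ^ j) * D"
    unfolding sum_distrib_right by (simp add: mult.commute)
  finally show ?thesis .
qed

lemma coeff_le_moments:
  assumes "finite \<Lambda>" and "card \<Lambda> \<le> m" and "k0 \<in> \<Lambda>"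
  shows "\<exists>M\<ge>0. \<forall>a. \<bar>a k0\<bar> \<le> M * Rnorm m (moments m \<Lambda> a)"
proof -
  \<comment> \<open>Pairing the moments with the coefficients of \<open>p\<close>, which vanishes on \<open>\<Lambda> - {k0}\<close>,
    isolates \<open>a k0\<close>.\<close>
  define p where "p = (\<Prod>i\<in>\<Lambda> - {k0}. [:- real i, 1:])"
  have "degree p \<le> card (\<Lambda> - {k0})"
    unfolding p_def using assms(1) degree_prod_sum_le[of "\<Lambda> - {k0}" "\<lambda>i. [:- real i, 1:]"] by simp
  also have "\<dots> < m"
    using assms card_gt_0_iff[of \<Lambda>] by (auto simp: card_Diff_singleton)
  finally have "degree p < m" .
  have poly_p: "poly p x = (\<Prod>i\<in>\<Lambda> - {k0}. x - real i)" for x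
    by (simp add: p_def poly_prod)
  have poly_p_eq: "poly p x = (\<Sum>j<m. coeff p j * x ^ j)" for x
    unfolding poly_altdef using \<open>degree p < m\<close>
    by (intro sum.mono_neutral_left) (auto simp: coeff_eq_0)
  have "poly p (real k0) \<noteq> 0"
    using assms by (simp add: poly_p)
  have pairing: "(\<Sum>j<m. coeff p j * moments m \<Lambda> a j) = a k0 * poly p (real k0)" for a
  proof -
    have "(\<Sum>j<m. coeff p j * moments m \<Lambda> a j) = (\<Sum>k\<in>\<Lambda>. a k * poly p (real k))"
      by (simp add: moments_def poly_p_eq sum_distrib_left sum_distrib_right algebra_simps
          sum.swap[of _ "{..<m}"])
    also have "\<dots> = a k0 * poly p (real k0)"
      using assms by (simp add: sum.remove poly_p prod_zero)
    finally show ?thesis .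
  qed
  define M where "M = (\<Sum>j<m. \<bar>coeff p j\<bar>) / \<bar>poly p (real k0)\<bar>"
  have "\<bar>a k0\<bar> \<le> M * Rnorm m (moments m \<Lambda> a)" for a
  proof -
    have "\<bar>a k0\<bar> * \<bar>poly p (real k0)\<bar> = \<bar>\<Sum>j<m. coeff p j * moments m \<Lambda> a j\<bar>"
      by (simp add: pairing abs_mult)
    also have "\<dots> \<le> (\<Sum>j<m. \<bar>coeff p j\<bar> * \<bar>moments m \<Lambda> a j\<bar>)"
      using sum_abs[of "\<lambda>j. coeff p j * moments m \<Lambda> a j" "{..<m}"] by (simp add: abs_mult)
    also have "\<dots> \<le> (\<Sum>j<m. \<bar>coeff p j\<bar> * Rnorm m (moments m \<Lambda> a))"
      by (intro sum_mono mult_left_mono abs_le_Rnorm) auto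
    finally show ?thesis
      using \<open>poly p (real k0) \<noteq> 0\<close>
      by (simp add: M_def sum_distrib_right[symmetric] pos_le_divide_eq mult.commute)
  qed
  moreover have "M \<ge> 0"
    by (simp add: M_def sum_nonneg)
  ultimately show ?thesis by blast
qed

lemma sparse_coeffs_le_moments:
  assumes "finite J"
  shows "\<exists>M\<ge>0. \<forall>a k. {k. a k \<noteq> 0} \<subseteq> J \<longrightarrow> card {k. a k \<noteq> 0} \<le> m \<longrightarrow>
    \<bar>a k\<bar> \<le> M * Rnorm m (moments m J a)"
proof -
  define X where "X = {(\<Lambda>, k). \<Lambda> \<subseteq> J \<and> card \<Lambda> \<le> m \<and> k \<in> \<Lambda>}"
  have "finite X"
    using assms by (intro finite_subset[of X "Pow J \<times> J"]) (auto simp: X_def)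
  have "\<forall>x\<in>X. \<exists>M\<ge>0. \<forall>a. \<bar>a (snd x)\<bar> \<le> M * Rnorm m (moments m (fst x) a)"
    using assms by (auto simp: X_def intro!: coeff_le_moments intro: finite_subset)
  then obtain M where M: "\<And>x. x \<in> X \<Longrightarrow> M x \<ge> 0"
    "\<And>x a. x \<in> X \<Longrightarrow> \<bar>a (snd x)\<bar> \<le> M x * Rnorm m (moments m (fst x) a)"
    by metis
  have "\<bar>a k\<bar> \<le> (\<Sum>x\<in>X. M x) * Rnorm m (moments m J a)"
    if supp: "{k. a k \<noteq> 0} \<subseteq> J" "card {k. a k \<noteq> 0} \<le> m" for a k
  proof (cases "a k = 0")
    case False
    then have x: "({k. a k \<noteq> 0}, k) \<in> X"
      using supp by (simp add: X_def)
    have "moments m {k. a k \<noteq> 0} a = moments m J a"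
      using supp assms by (auto simp: moments_def fun_eq_iff intro: sum.mono_neutral_left)
    then have "\<bar>a k\<bar> \<le> M ({k. a k \<noteq> 0}, k) * Rnorm m (moments m J a)"
      using M(2)[OF x, of a] by simp
    also have "\<dots> \<le> (\<Sum>x\<in>X. M x) * Rnorm m (moments m J a)"
      using M(1) x \<open>finite X\<close> by (intro mult_right_mono Rnorm_nonneg member_le_sum) auto
    finally show ?thesis .
  qed (simp add: M(1) sum_nonneg Rnorm_nonneg)
  moreover have "(\<Sum>x\<in>X. M x) \<ge> 0"
    using M(1) by (simp add: sum_nonneg)
  ultimately show ?thesis by blast
qed

lemma lipschitz_decoder:
  fixes h :: "nat \<Rightarrow> 'h::real_normed_vector" and p :: "'z \<Rightarrow> nat \<Rightarrow> real"
  assumes "Z \<noteq> {}" and "K \<ge> 0"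
    and lip: "\<And>z z' k. z \<in> Z \<Longrightarrow> z' \<in> Z \<Longrightarrow> \<bar>a z k - a z' k\<bar> \<le> K * Rnorm m (p z - p z')"
  obtains \<phi> where "cont_Rm_H m \<phi>" "\<And>z. z \<in> Z \<Longrightarrow> \<phi> (p z) = (\<Sum>k\<in>J. a z k *\<^sub>R h k)"
proof -
  have "\<forall>k. \<exists>G. (\<forall>z\<in>Z. G (p z) = a z k) \<and> (\<forall>y y'. \<bar>G y - G y'\<bar> \<le> K * Rnorm m (y - y'))"
    using mcshane_extension[OF assms(1,2), where d="\<lambda>y y'. Rnorm m (y - y')"]
      Rnorm_minus_commute Rnorm_triangle lip by simp
  then obtain G where G: "\<And>k z. z \<in> Z \<Longrightarrow> G k (p z) = a z k"
    "\<And>k y y'. \<bar>G k y - G k y'\<bar> \<le> K * Rnorm m (y - y')"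
    by metis
  define \<phi> where "\<phi> y = (\<Sum>k\<in>J. G k y *\<^sub>R h k)" for y
  have "norm (\<phi> y - \<phi> y') \<le> (K * (\<Sum>k\<in>J. norm (h k))) * Rnorm m (y - y')" for y y'
  proof -
    have "norm (\<phi> y - \<phi> y') = norm (\<Sum>k\<in>J. (G k y - G k y') *\<^sub>R h k)"
      by (simp add: \<phi>_def sum_subtractf scaleR_diff_left)
    also have "\<dots> \<le> (\<Sum>k\<in>J. \<bar>G k y - G k y'\<bar> * norm (h k))"
      by (rule order_trans[OF norm_sum]) simp
    also have "\<dots> \<le> (\<Sum>k\<in>J. K * Rnorm m (y - y') * norm (h k))"
      by (intro sum_mono mult_right_mono G(2)) simp
    finally show ?thesis
      by (simp add: sum_distrib_left sum_distrib_right mult_ac)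
  qed
  then have "cont_Rm_H m \<phi>"
    using \<open>K \<ge> 0\<close> by (intro cont_Rm_H_if_lipschitz[of "K * (\<Sum>k\<in>J. norm (h k))"])
      (auto intro!: mult_nonneg_nonneg sum_nonneg)
  moreover have "\<phi> (p z) = (\<Sum>k\<in>J. a z k *\<^sub>R h k)" if "z \<in> Z" for z
    using that by (simp add: \<phi>_def G(1))
  ultimately show thesis
    using that by blast
qed

lemma e_cont_le:
  assumes "cont_F_Rm F qn m N" and "cont_Rm_H m \<phi>"
    and "\<And>f. f \<in> unit_ball_F F qn \<Longrightarrow> norm (S f - \<phi> (N f)) \<le> E"
  shows "e_cont m S F qn \<le> ereal E"
  unfolding e_cont_def err_def
  by (rule INF_lower2[of "(N, \<phi>)"]) (auto intro!: SUP_least simp: assms)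

lemma zero_in_unit_ball_F:
  assumes "is_quasinormed_subspace F qn"
  shows "0 \<in> unit_ball_F F qn"
  using assms subspace_0 by (fastforce simp: is_quasinormed_subspace_def unit_ball_F_def)

lemma norm_le_qn:
  assumes qn: "is_quasinormed_subspace F qn"
    and bound: "\<And>x. x \<in> unit_ball_F F qn \<Longrightarrow> norm x \<le> M" and "z \<in> F"
  shows "norm z \<le> M * qn z"
proof (cases "qn z = 0")
  case True
  then have "z = 0"
    using qn \<open>z \<in> F\<close> by (simp add: is_quasinormed_subspace_def)
  with True show ?thesis
    by simp
next
  case False
  then have "qn z > 0"
    using qn \<open>z \<in> F\<close> by (simp add: is_quasinormed_subspace_def less_le)
  moreover have "(1 / qn z) *\<^sub>R z \<in> unit_ball_F F qn"
    using qn \<open>z \<in> F\<close> \<open>qn z > 0\<close>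
    by (simp add: is_quasinormed_subspace_def unit_ball_F_def subspace_scale)
  ultimately show ?thesis
    using bound by (fastforce simp: pos_divide_le_eq mult.commute)
qed

lemma cont_F_Rm_moments:
  fixes a :: "'g::real_normed_vector \<Rightarrow> nat \<Rightarrow> real"
  assumes qn: "is_quasinormed_subspace F qn" and "bounded (unit_ball_F F qn)"
    and "L \<ge> 0" and lip: "\<And>f f' k. \<bar>a f k - a f' k\<bar> \<le> L * norm (f - f')"
  shows "cont_F_Rm F qn m (\<lambda>f. moments m J (a f))"
proof -
  obtain M where M: "\<And>x. x \<in> unit_ball_F F qn \<Longrightarrow> norm x \<le> M"
    using \<open>bounded (unit_ball_F F qn)\<close> by (meson bounded_iff)
  define W where "W = (\<Sum>j<m. \<Sum>k\<in>J. real k ^ j)"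
  have "Rnorm m (moments m J (a y) - moments m J (a x)) \<le> (W * L * M) * qn (y - x)"
    if "x \<in> F" "y \<in> F" for x y
  proof -
    have "y - x \<in> F"
      using qn that by (simp add: is_quasinormed_subspace_def subspace_diff)
    then have "\<bar>(a y - a x) k\<bar> \<le> L * M * qn (y - x)" for k
      using order_trans[OF lip mult_left_mono[OF norm_le_qn[OF qn M] \<open>L \<ge> 0\<close>]]
      by (simp add: mult.assoc)
    then show ?thesis
      using Rnorm_moments_le[of J "a y - a x" "L * M * qn (y - x)" m]
      by (simp add: moments_diff W_def mult.assoc)
  qed
  moreover have "W * L * M \<ge> 0"
    using \<open>L \<ge> 0\<close> M[OF zero_in_unit_ball_F[OF qn]] by (simp add: W_def sum_nonneg)
  ultimately show ?thesis
    by (intro cont_F_Rm_if_lipschitz) (auto simp: moments_in_Rvecs)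
qed

lemma e_cont_le_if_sparse_lipschitz_coeffs:
  fixes S :: "'g::real_normed_vector \<Rightarrow> 'h::real_normed_vector" and h :: "nat \<Rightarrow> 'h"
    and a :: "'g \<Rightarrow> nat \<Rightarrow> real"
  assumes qn: "is_quasinormed_subspace F qn" and "bounded (unit_ball_F F qn)"
    and "finite J" and supp: "\<And>f. {k. a f k \<noteq> 0} \<subseteq> J"
    and sparse: "\<And>f. card {k. a f k \<noteq> 0} \<le> 2 * n"
    and "L \<ge> 0" and lip: "\<And>f f' k. \<bar>a f k - a f' k\<bar> \<le> L * norm (f - f')"
    and err: "\<And>f. f \<in> unit_ball_F F qn \<Longrightarrow> norm (S f - (\<Sum>k\<in>J. a f k *\<^sub>R h k)) \<le> E"
  shows "e_cont (4 * n + 1) S F qn \<le> ereal E"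
proof -
  define m where "m = 4 * n + 1"
  define N where "N f = moments m J (a f)" for f
  obtain K where "K \<ge> 0" and K: "\<And>v k. {k. v k \<noteq> 0} \<subseteq> J \<Longrightarrow> card {k. v k \<noteq> 0} \<le> m \<Longrightarrow>
      \<bar>v k\<bar> \<le> K * Rnorm m (moments m J v)"
    using sparse_coeffs_le_moments[OF \<open>finite J\<close>] by blast
  \<comment> \<open>\<open>a f - a f'\<close> is \<open>4n\<close>-sparse, so its moments determine it stably\<close>
  have "\<bar>a f k - a f' k\<bar> \<le> K * Rnorm m (N f - N f')" for f f' k
  proof -
    have sub: "{k. (a f - a f') k \<noteq> 0} \<subseteq> {k. a f k \<noteq> 0} \<union> {k. a f' k \<noteq> 0}"
      by auto
    then have "card {k. (a f - a f') k \<noteq> 0} \<le> card {k. a f k \<noteq> 0} + card {k. a f' k \<noteq> 0}"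
      using supp \<open>finite J\<close> by (meson card_Un_le card_mono finite_UnI finite_subset le_trans)
    then have "card {k. (a f - a f') k \<noteq> 0} \<le> m"
      using sparse[of f] sparse[of f'] by (simp add: m_def)
    moreover have "{k. (a f - a f') k \<noteq> 0} \<subseteq> J"
      using sub supp by blast
    ultimately show ?thesis
      using K[of "a f - a f'" k] by (simp add: N_def moments_diff)
  qed
  then obtain \<phi> where "cont_Rm_H m \<phi>"
    and \<phi>: "\<And>f. f \<in> unit_ball_F F qn \<Longrightarrow> \<phi> (N f) = (\<Sum>k\<in>J. a f k *\<^sub>R h k)"
    using lipschitz_decoder[of "unit_ball_F F qn" K a m N h J] zero_in_unit_ball_F[OF qn] \<open>K \<ge> 0\<close>
    by blast
  have "cont_F_Rm F qn m N"
    unfolding N_def using cont_F_Rm_moments[OF qn \<open>bounded _\<close> \<open>L \<ge> 0\<close> lip] .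
  then show ?thesis
    using e_cont_le[OF _ \<open>cont_Rm_H m \<phi>\<close>, of F qn N S E] err \<phi> by (simp add: m_def)
qed

section \<open>Orthogonal projection onto finitely many Riesz vectors\<close>

definition is_proj_coeffs :: "('i \<Rightarrow> 'a::real_inner) \<Rightarrow> 'i set \<Rightarrow> 'a \<Rightarrow> ('i \<Rightarrow> real) \<Rightarrow> bool" where
  "is_proj_coeffs h J u c \<longleftrightarrow> (\<forall>d. inner (u - (\<Sum>k\<in>J. c k *\<^sub>R h k)) (\<Sum>k\<in>J. d k *\<^sub>R h k) = 0)"

lemma proj_coeffs_insert:
  fixes h :: "'i \<Rightarrow> 'a::real_inner"
  assumes "finite J" and "j \<notin> J"
    and cj: "is_proj_coeffs h J (h j) cj" and cu: "is_proj_coeffs h J u cu"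
  defines "r \<equiv> h j - (\<Sum>k\<in>J. cj k *\<^sub>R h k)"
  defines "\<alpha> \<equiv> inner r u / inner r r"
  shows "is_proj_coeffs h (insert j J) u ((\<lambda>k. cu k - \<alpha> * cj k)(j := \<alpha>))"
proof -
  \<comment> \<open>Gram--Schmidt: \<open>r\<close> is the component of \<open>h j\<close> orthogonal to all combinations of \<open>h ` J\<close>;
    if \<open>r = 0\<close> then \<open>\<alpha> = 0\<close> by the convention \<open>x / 0 = 0\<close>\<close>
  define c where "c = (\<lambda>k. cu k - \<alpha> * cj k)(j := \<alpha>)"
  define e where "e = u - (\<Sum>k\<in>J. cu k *\<^sub>R h k)"
  have r_orth: "inner r (\<Sum>k\<in>J. d k *\<^sub>R h k) = 0" for d
    using cj by (simp add: is_proj_coeffs_def r_def)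
  have e_orth: "inner e (\<Sum>k\<in>J. d k *\<^sub>R h k) = 0" for d
    using cu by (simp add: is_proj_coeffs_def e_def)
  have residual: "u - (\<Sum>k\<in>insert j J. c k *\<^sub>R h k) = e - \<alpha> *\<^sub>R r"
  proof -
    have "(\<Sum>k\<in>J. c k *\<^sub>R h k) = (\<Sum>k\<in>J. (cu k - \<alpha> * cj k) *\<^sub>R h k)"
      using assms(2) by (intro sum.cong) (auto simp: c_def)
    then show ?thesis
      using assms(1,2)
      by (simp add: c_def e_def r_def scaleR_diff_left sum_subtractf scaleR_sum_right algebra_simps)
  qed
  have "inner (e - \<alpha> *\<^sub>R r) (\<Sum>k\<in>insert j J. d k *\<^sub>R h k) = 0" for d
  proof -
    have "(\<Sum>k\<in>insert j J. d k *\<^sub>R h k) = d j *\<^sub>R r + (\<Sum>k\<in>J. (d k + d j * cj k) *\<^sub>R h k)"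
      using assms(1,2) by (simp add: r_def scaleR_add_left sum.distrib scaleR_sum_right algebra_simps)
    then have "inner (e - \<alpha> *\<^sub>R r) (\<Sum>k\<in>insert j J. d k *\<^sub>R h k) = d j * (inner e r - \<alpha> * inner r r)"
      using r_orth e_orth by (simp add: inner_add_right inner_diff_left right_diff_distrib)
    also have "inner e r = inner r u"
      using r_orth[of cu] by (simp add: e_def inner_commute inner_diff_right)
    also have "\<alpha> * inner r r = inner r u"
      by (cases "r = 0") (simp_all add: \<alpha>_def)
    finally show ?thesis
      by simp
  qed
  then show ?thesis
    unfolding is_proj_coeffs_def residual[unfolded c_def] by blast
qed

lemma proj_coeffs_exist:
  fixes h :: "'i \<Rightarrow> 'a::real_inner"
  assumes "finite J"
  shows "\<exists>c. is_proj_coeffs h J u c"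
  using assms
proof (induction J arbitrary: u rule: finite_induct)
  case empty
  show ?case
    by (simp add: is_proj_coeffs_def)
next
  case (insert j J)
  then show ?case
    by (meson proj_coeffs_insert)
qed

lemma proj_coeffs_pythagoras:
  assumes "is_proj_coeffs h J u c"
  shows "(norm (u - (\<Sum>k\<in>J. d k *\<^sub>R h k)))\<^sup>2
    = (norm (u - (\<Sum>k\<in>J. c k *\<^sub>R h k)))\<^sup>2 + (norm (\<Sum>k\<in>J. (c k - d k) *\<^sub>R h k))\<^sup>2"
proof -
  have decomp: "u - (\<Sum>k\<in>J. d k *\<^sub>R h k)
      = (u - (\<Sum>k\<in>J. c k *\<^sub>R h k)) + (\<Sum>k\<in>J. (c k - d k) *\<^sub>R h k)"
    by (simp add: scaleR_diff_left sum_subtractf)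
  have "orthogonal (u - (\<Sum>k\<in>J. c k *\<^sub>R h k)) (\<Sum>k\<in>J. (c k - d k) *\<^sub>R h k)"
    using assms by (simp add: is_proj_coeffs_def orthogonal_def)
  then show ?thesis
    unfolding decomp by (rule norm_add_Pythagorean)
qed

lemma proj_coeffs_nonexpansive:
  assumes "is_proj_coeffs h J u c" and "is_proj_coeffs h J u' c'"
  shows "norm (\<Sum>k\<in>J. (c k - c' k) *\<^sub>R h k) \<le> norm (u - u')"
proof -
  define w where "w = (\<Sum>k\<in>J. (c k - c' k) *\<^sub>R h k)"
  define e where "e = (u - (\<Sum>k\<in>J. c k *\<^sub>R h k)) - (u' - (\<Sum>k\<in>J. c' k *\<^sub>R h k))"
  have decomp: "u - u' = e + w"
    by (simp add: e_def w_def scaleR_diff_left sum_subtractf)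
  have "inner (u - (\<Sum>k\<in>J. c k *\<^sub>R h k)) w = 0" "inner (u' - (\<Sum>k\<in>J. c' k *\<^sub>R h k)) w = 0"
    using assms by (simp_all add: is_proj_coeffs_def w_def)
  then have "orthogonal e w"
    unfolding orthogonal_def e_def inner_diff_left by simp
  then have "(norm (u - u'))\<^sup>2 = (norm e)\<^sup>2 + (norm w)\<^sup>2"
    unfolding decomp by (rule norm_add_Pythagorean)
  then have "(norm w)\<^sup>2 \<le> (norm (u - u'))\<^sup>2"
    by simp
  then have "norm w \<le> norm (u - u')"
    by (rule power2_le_imp_le) simp
  then show ?thesis
    by (simp add: w_def)
qed

lemma riesz_ratio_in_riesz_ratios:
  assumes "finite I" and "L2_set a I \<noteq> 0"
  shows "norm (\<Sum>k\<in>I. a k *\<^sub>R h k) / L2_set a I \<in> riesz_ratios h"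
proof -
  have "\<exists>k\<in>I. a k \<noteq> 0"
    using assms by (auto simp: L2_set_eq_0_iff)
  then show ?thesis
    using assms(1) unfolding riesz_ratios_def L2_set_def by (intro CollectI exI[of _ a] exI[of _ I]) simp
qed

lemma riesz_lower_bound:
  assumes "finite I"
  shows "riesz_A h * L2_set a I \<le> norm (\<Sum>k\<in>I. a k *\<^sub>R h k)"
proof (cases "L2_set a I = 0")
  case False
  have "riesz_A h \<le> norm (\<Sum>k\<in>I. a k *\<^sub>R h k) / L2_set a I"
    unfolding riesz_A_def
    by (rule cInf_lower[OF riesz_ratio_in_riesz_ratios[OF assms False]], rule bdd_belowI[of _ 0])
      (auto simp: riesz_ratios_def intro!: divide_nonneg_nonneg sum_nonneg)
  then show ?thesis
    using False L2_set_nonneg[of a I] by (simp add: pos_le_divide_eq)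
qed simp

lemma riesz_upper_bound:
  assumes "is_riesz_basis h" and "finite I"
  shows "norm (\<Sum>k\<in>I. a k *\<^sub>R h k) \<le> riesz_B h * L2_set a I"
proof (cases "L2_set a I = 0")
  case True
  then have "\<forall>k\<in>I. a k = 0"
    using assms(2) by (simp add: L2_set_eq_0_iff)
  then show ?thesis
    using True by simp
next
  case False
  have "norm (\<Sum>k\<in>I. a k *\<^sub>R h k) / L2_set a I \<le> riesz_B h"
    unfolding riesz_B_def using assms(1)
    by (intro cSup_upper[OF riesz_ratio_in_riesz_ratios[OF assms(2) False]])
      (simp add: is_riesz_basis_def)
  then show ?thesis
    using False L2_set_nonneg[of a I] by (simp add: pos_divide_le_eq mult.commute)
qed

section \<open>Soft thresholding\<close>

text \<open>\<open>thr_level J r c\<close> is the \<open>(r+1)\<close>-st largest of the \<open>\<bar>c k\<bar>\<close>, \<open>k \<in> J\<close> (or \<open>0\<close> if there are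
  at most \<open>r\<close> of them); the min-max form makes it \<open>1\<close>-Lipschitz in \<open>c\<close>.\<close>

definition thr_level :: "nat set \<Rightarrow> nat \<Rightarrow> (nat \<Rightarrow> real) \<Rightarrow> real" where
  "thr_level J r c =
     Min ((\<lambda>T. Max (insert 0 ((\<lambda>k. \<bar>c k\<bar>) ` (J - T)))) ` {T. T \<subseteq> J \<and> card T \<le> r})"

lemma thr_level_le:
  assumes "finite J" and "T \<subseteq> J" and "card T \<le> r"
  shows "thr_level J r c \<le> Max (insert 0 ((\<lambda>k. \<bar>c k\<bar>) ` (J - T)))"
  unfolding thr_level_def using assms by (intro Min_le) auto

lemma thr_level_attained:
  assumes "finite J"
  obtains T where "T \<subseteq> J" "card T \<le> r" "thr_level J r c = Max (insert 0 ((\<lambda>k. \<bar>c k\<bar>) ` (J - T)))"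
proof -
  have "{} \<in> {T. T \<subseteq> J \<and> card T \<le> r}"
    by simp
  then have "thr_level J r c
      \<in> (\<lambda>T. Max (insert 0 ((\<lambda>k. \<bar>c k\<bar>) ` (J - T)))) ` {T. T \<subseteq> J \<and> card T \<le> r}"
    unfolding thr_level_def using assms by (intro Min_in) auto
  then show thesis
    using that by blast
qed

lemma thr_level_nonneg:
  assumes "finite J"
  shows "thr_level J r c \<ge> 0"
  by (metis assms thr_level_attained Max_ge finite_Diff finite_imageI finite_insert insertI1)

lemma card_gt_thr_level_le:
  assumes "finite J"
  shows "card {k\<in>J. \<bar>c k\<bar> > thr_level J r c} \<le> r"
proof -
  obtain T where T: "T \<subseteq> J" "card T \<le> r"
    "thr_level J r c = Max (insert 0 ((\<lambda>k. \<bar>c k\<bar>) ` (J - T)))"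
    using thr_level_attained[OF assms] by blast
  have "\<bar>c k\<bar> \<le> thr_level J r c" if "k \<in> J - T" for k
    unfolding T(3) using assms that by (intro Max_ge) auto
  then have "{k\<in>J. \<bar>c k\<bar> > thr_level J r c} \<subseteq> T"
    by force
  then show ?thesis
    using T(1,2) assms by (meson card_mono finite_subset le_trans)
qed

lemma card_ge_thr_level_gt:
  assumes "finite J" and "thr_level J r c > 0"
  shows "card {k\<in>J. \<bar>c k\<bar> \<ge> thr_level J r c} > r"
proof (rule ccontr)
  let ?G = "{k\<in>J. \<bar>c k\<bar> \<ge> thr_level J r c}"
  assume "\<not> card ?G > r"
  then have "thr_level J r c \<le> Max (insert 0 ((\<lambda>k. \<bar>c k\<bar>) ` (J - ?G)))"
    using assms by (intro thr_level_le) auto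
  also have "\<dots> < thr_level J r c"
    using assms by (subst Max_less_iff) auto
  finally show False
    by simp
qed

lemma thr_level_lipschitz:
  assumes "finite J" and "D \<ge> 0" and "\<And>k. k \<in> J \<Longrightarrow> \<bar>c k - c' k\<bar> \<le> D"
  shows "\<bar>thr_level J r c - thr_level J r c'\<bar> \<le> D"
proof -
  have one_sided: "thr_level J r c \<le> thr_level J r c' + D"
    if close: "\<And>k. k \<in> J \<Longrightarrow> \<bar>c k - c' k\<bar> \<le> D" for c c'
  proof -
    obtain T where T: "T \<subseteq> J" "card T \<le> r"
      "thr_level J r c' = Max (insert 0 ((\<lambda>k. \<bar>c' k\<bar>) ` (J - T)))"
      using thr_level_attained[OF assms(1)] by blast
    have "\<bar>c k\<bar> \<le> thr_level J r c' + D" if "k \<in> J - T" for k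
    proof -
      have "\<bar>c' k\<bar> \<le> thr_level J r c'"
        unfolding T(3) using assms(1) that by (intro Max_ge) auto
      then show ?thesis
        using close[OF DiffD1[OF that]] abs_triangle_ineq2[of "c k" "c' k"] by linarith
    qed
    then have "Max (insert 0 ((\<lambda>k. \<bar>c k\<bar>) ` (J - T))) \<le> thr_level J r c' + D"
      using assms(1,2) thr_level_nonneg[OF assms(1), of r c'] by (subst Max_le_iff) auto
    then show ?thesis
      using thr_level_le[OF assms(1) T(1,2), of c] by linarith
  qed
  show ?thesis
    using one_sided[of c c'] one_sided[of c' c] assms(3) by (force simp: abs_minus_commute)
qed

text \<open>This is \<open>sgn x * max (\<bar>x\<bar> - t) 0\<close> for \<open>t \<ge> 0\<close>.\<close>

definition soft_threshold :: "real \<Rightarrow> real \<Rightarrow> real" where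
  "soft_threshold t x = max (x - t) 0 + min (x + t) 0"

lemma soft_threshold_error:
  assumes "t \<ge> 0"
  shows "(x - soft_threshold t x)\<^sup>2 \<le> x\<^sup>2" and "(x - soft_threshold t x)\<^sup>2 \<le> t\<^sup>2"
proof -
  have "\<bar>x - soft_threshold t x\<bar> \<le> \<bar>x\<bar>" "\<bar>x - soft_threshold t x\<bar> \<le> \<bar>t\<bar>"
    using assms by (auto simp: soft_threshold_def max_def min_def)
  then show "(x - soft_threshold t x)\<^sup>2 \<le> x\<^sup>2" "(x - soft_threshold t x)\<^sup>2 \<le> t\<^sup>2"
    by (simp_all add: abs_le_square_iff)
qed

lemma soft_threshold_nonzero: "t \<ge> 0 \<Longrightarrow> soft_threshold t x \<noteq> 0 \<Longrightarrow> \<bar>x\<bar> > t"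
  by (auto simp: soft_threshold_def max_def min_def split: if_splits)

lemma abs_max_0_diff_le: "\<bar>max (a::real) 0 - max b 0\<bar> \<le> \<bar>a - b\<bar>"
  by (simp add: max_def)

lemma abs_min_0_diff_le: "\<bar>min (a::real) 0 - min b 0\<bar> \<le> \<bar>a - b\<bar>"
  by (simp add: min_def)

lemma soft_threshold_lipschitz:
  "\<bar>soft_threshold t x - soft_threshold t' x'\<bar> \<le> 2 * (\<bar>x - x'\<bar> + \<bar>t - t'\<bar>)"
proof -
  have "\<bar>soft_threshold t x - soft_threshold t' x'\<bar>
      \<le> \<bar>max (x - t) 0 - max (x' - t') 0\<bar> + \<bar>min (x + t) 0 - min (x' + t') 0\<bar>"
    unfolding soft_threshold_def by (rule order_trans[OF _ abs_triangle_ineq]) (simp add: algebra_simps)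
  also have "\<dots> \<le> \<bar>(x - t) - (x' - t')\<bar> + \<bar>(x + t) - (x' + t')\<bar>"
    using abs_max_0_diff_le[of "x - t" "x' - t'"] abs_min_0_diff_le[of "x + t" "x' + t'"] by (rule add_mono)
  also have "\<dots> = \<bar>(x - x') - (t - t')\<bar> + \<bar>(x - x') + (t - t')\<bar>"
    by (simp add: algebra_simps)
  also have "\<dots> \<le> 2 * (\<bar>x - x'\<bar> + \<bar>t - t'\<bar>)"
    using abs_triangle_ineq4[of "x - x'" "t - t'"] abs_triangle_ineq[of "x - x'" "t - t'"] by simp
  finally show ?thesis .
qed

definition thresholded :: "nat set \<Rightarrow> nat \<Rightarrow> (nat \<Rightarrow> real) \<Rightarrow> nat \<Rightarrow> real" where
  "thresholded J r c k = (if k \<in> J then soft_threshold (thr_level J r c) (c k) else 0)"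

lemma support_thresholded:
  assumes "finite J"
  shows "{k. thresholded J r c k \<noteq> 0} \<subseteq> {k\<in>J. \<bar>c k\<bar> > thr_level J r c}"
  using soft_threshold_nonzero[OF thr_level_nonneg[OF assms]]
  by (auto simp: thresholded_def split: if_splits)

lemma card_support_thresholded:
  assumes "finite J"
  shows "card {k. thresholded J r c k \<noteq> 0} \<le> r"
proof -
  have "card {k. thresholded J r c k \<noteq> 0} \<le> card {k\<in>J. \<bar>c k\<bar> > thr_level J r c}"
    using assms support_thresholded[OF assms] by (intro card_mono) auto
  then show ?thesis
    using card_gt_thr_level_le[OF assms, of r c] by linarith
qed

lemma thresholded_lipschitz:
  assumes "finite J"
  shows "\<bar>thresholded J r c k - thresholded J r c' k\<bar> \<le> 4 * L2_set (\<lambda>k. c k - c' k) J"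
proof (cases "k \<in> J")
  case True
  define D where "D = L2_set (\<lambda>k. c k - c' k) J"
  have close: "\<bar>c k - c' k\<bar> \<le> D" if "k \<in> J" for k
    using member_le_L2_set[OF assms that, of "\<lambda>k. \<bar>c k - c' k\<bar>"] by (simp add: D_def L2_set_def)
  have "\<bar>thr_level J r c - thr_level J r c'\<bar> \<le> D"
    using assms close by (intro thr_level_lipschitz) (auto simp: D_def)
  moreover have "\<bar>thresholded J r c k - thresholded J r c' k\<bar>
      \<le> 2 * (\<bar>c k - c' k\<bar> + \<bar>thr_level J r c - thr_level J r c'\<bar>)"
    using True soft_threshold_lipschitz by (simp add: thresholded_def)
  ultimately show ?thesis
    using close[OF True] by (simp add: D_def)
qed (simp add: thresholded_def)

lemma thr_level_tail_bound:
  assumes "finite J" and "\<Lambda> \<subseteq> J" and "card \<Lambda> \<le> n"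
  shows "real n * (thr_level J (2 * n) c)\<^sup>2 \<le> (\<Sum>k\<in>J - \<Lambda>. (c k)\<^sup>2)"
proof (cases "thr_level J (2 * n) c = 0")
  case False
  \<comment> \<open>more than \<open>2 n\<close> coefficients reach the threshold, so at least \<open>n\<close> of them lie outside \<open>\<Lambda>\<close>\<close>
  define t where "t = thr_level J (2 * n) c"
  define G where "G = {k\<in>J. \<bar>c k\<bar> \<ge> t}"
  have "t > 0"
    using False thr_level_nonneg[OF assms(1), of "2 * n" c] by (simp add: t_def)
  then have "card G > 2 * n"
    using card_ge_thr_level_gt[OF assms(1)] by (simp add: G_def t_def)
  moreover have "card G - card \<Lambda> \<le> card (G - \<Lambda>)"
    using assms(1,2) by (intro diff_card_le_card_Diff) (auto intro: finite_subset)
  ultimately have "n \<le> card (G - \<Lambda>)"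
    using assms(3) by linarith
  then have "real n * t\<^sup>2 \<le> (\<Sum>k\<in>G - \<Lambda>. t\<^sup>2)"
    by (simp add: mult_right_mono)
  also have "\<dots> \<le> (\<Sum>k\<in>G - \<Lambda>. (c k)\<^sup>2)"
    using \<open>t > 0\<close> by (intro sum_mono) (auto simp: G_def abs_le_square_iff[symmetric])
  also have "\<dots> \<le> (\<Sum>k\<in>J - \<Lambda>. (c k)\<^sup>2)"
    using assms(1) by (intro sum_mono2) (auto simp: G_def)
  finally show ?thesis
    by (simp add: t_def)
qed (simp add: sum_nonneg)

lemma thresholded_error:
  assumes "finite J" and "card {k\<in>J. b k \<noteq> 0} \<le> n"
  shows "(\<Sum>k\<in>J. (c k - thresholded J (2 * n) c k)\<^sup>2) \<le> 2 * (\<Sum>k\<in>J. (c k - b k)\<^sup>2)"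
proof -
  define t where "t = thr_level J (2 * n) c"
  define \<Lambda> where "\<Lambda> = {k\<in>J. b k \<noteq> 0}"
  have "t \<ge> 0"
    unfolding t_def using thr_level_nonneg[OF assms(1)] .
  have err: "(c k - thresholded J (2 * n) c k)\<^sup>2 \<le> (c k)\<^sup>2"
    "(c k - thresholded J (2 * n) c k)\<^sup>2 \<le> t\<^sup>2" if "k \<in> J" for k
    using that soft_threshold_error[OF \<open>t \<ge> 0\<close>] by (simp_all add: thresholded_def t_def)
  have tail: "(\<Sum>k\<in>J - \<Lambda>. (c k)\<^sup>2) \<le> (\<Sum>k\<in>J. (c k - b k)\<^sup>2)"
  proof -
    have "(\<Sum>k\<in>J - \<Lambda>. (c k)\<^sup>2) = (\<Sum>k\<in>J - \<Lambda>. (c k - b k)\<^sup>2)"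
      by (intro sum.cong) (auto simp: \<Lambda>_def)
    also have "\<dots> \<le> (\<Sum>k\<in>J. (c k - b k)\<^sup>2)"
      using assms(1) by (intro sum_mono2) auto
    finally show ?thesis .
  qed
  have "(\<Sum>k\<in>J. (c k - thresholded J (2 * n) c k)\<^sup>2)
      = (\<Sum>k\<in>J - \<Lambda>. (c k - thresholded J (2 * n) c k)\<^sup>2) + (\<Sum>k\<in>J \<inter> \<Lambda>. (c k - thresholded J (2 * n) c k)\<^sup>2)"
    using sum.Int_Diff[OF assms(1)] by (simp add: add.commute)
  also have "\<dots> \<le> (\<Sum>k\<in>J - \<Lambda>. (c k)\<^sup>2) + (\<Sum>k\<in>J \<inter> \<Lambda>. t\<^sup>2)"
    using err by (intro add_mono sum_mono) auto
  also have "(\<Sum>k\<in>J \<inter> \<Lambda>. t\<^sup>2) \<le> real n * t\<^sup>2"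
    using assms(2) by (simp add: \<Lambda>_def Int_absorb1 mult_right_mono)
  also have "\<dots> \<le> (\<Sum>k\<in>J - \<Lambda>. (c k)\<^sup>2)"
    unfolding t_def using assms by (intro thr_level_tail_bound) (auto simp: \<Lambda>_def)
  finally show ?thesis
    using tail by linarith
qed

lemma power2_L2_set: "(L2_set f A)\<^sup>2 = (\<Sum>i\<in>A. (f i)\<^sup>2)"
  by (simp add: L2_set_def sum_nonneg)

lemma thresholded_coeff_error_riesz:
  fixes h :: "nat \<Rightarrow> 'a::real_normed_vector"
  assumes "is_riesz_basis h" and "riesz_B h \<le> C * riesz_A h" and "finite J"
    and "card {k\<in>J. b k \<noteq> 0} \<le> n"
  shows "(norm (\<Sum>k\<in>J. (c k - thresholded J (2 * n) c k) *\<^sub>R h k))\<^sup>2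
    \<le> 2 * C\<^sup>2 * (norm (\<Sum>k\<in>J. (c k - b k) *\<^sub>R h k))\<^sup>2"
proof -
  define A where "A = riesz_A h"
  define Lt where "Lt = L2_set (\<lambda>k. c k - thresholded J (2 * n) c k) J"
  define Lb where "Lb = L2_set (\<lambda>k. c k - b k) J"
  have "A > 0"
    using assms(1) by (simp add: A_def is_riesz_basis_def)
  have "norm (\<Sum>k\<in>J. (c k - thresholded J (2 * n) c k) *\<^sub>R h k) \<le> riesz_B h * Lt"
    unfolding Lt_def using riesz_upper_bound[OF assms(1,3)] .
  also have "\<dots> \<le> C * A * Lt"
    using assms(2) by (intro mult_right_mono) (simp_all add: A_def Lt_def)
  finally have "(norm (\<Sum>k\<in>J. (c k - thresholded J (2 * n) c k) *\<^sub>R h k))\<^sup>2 \<le> (C * A * Lt)\<^sup>2"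
    by (rule power_mono) simp
  also have "\<dots> = (C * A)\<^sup>2 * Lt\<^sup>2"
    by (simp add: power_mult_distrib)
  also have "\<dots> \<le> (C * A)\<^sup>2 * (2 * Lb\<^sup>2)"
    using thresholded_error[OF assms(3,4), of c]
    by (intro mult_left_mono) (simp_all add: power2_L2_set Lt_def Lb_def)
  also have "\<dots> = 2 * C\<^sup>2 * (A * Lb)\<^sup>2"
    by (simp add: power_mult_distrib)
  also have "\<dots> \<le> 2 * C\<^sup>2 * (norm (\<Sum>k\<in>J. (c k - b k) *\<^sub>R h k))\<^sup>2"
    using riesz_lower_bound[OF assms(3), of h "\<lambda>k. c k - b k"] \<open>A > 0\<close>
    by (intro mult_left_mono power_mono) (simp_all add: A_def Lb_def)
  finally show ?thesis .
qed

lemma thresholded_approx: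
  fixes h :: "nat \<Rightarrow> 'a::real_inner"
  assumes h: "is_riesz_basis h" "riesz_B h \<le> C * riesz_A h" and "C \<ge> 1" and "finite J"
    and proj: "is_proj_coeffs h J u c" and "card {k\<in>J. b k \<noteq> 0} \<le> n"
  shows "norm (u - (\<Sum>k\<in>J. thresholded J (2 * n) c k *\<^sub>R h k))
    \<le> sqrt 2 * C * norm (u - (\<Sum>k\<in>J. b k *\<^sub>R h k))"
proof -
  define a where "a = thresholded J (2 * n) c"
  define R where "R = norm (u - (\<Sum>k\<in>J. c k *\<^sub>R h k))"
  have "R\<^sup>2 \<le> 2 * C\<^sup>2 * R\<^sup>2"
  proof -
    have "1 \<le> 2 * C\<^sup>2"
      using \<open>C \<ge> 1\<close> one_le_power[of C 2] by linarith
    then show ?thesis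
      using mult_right_mono[of 1 "2 * C\<^sup>2" "R\<^sup>2"] by simp
  qed
  have "(norm (u - (\<Sum>k\<in>J. a k *\<^sub>R h k)))\<^sup>2 = R\<^sup>2 + (norm (\<Sum>k\<in>J. (c k - a k) *\<^sub>R h k))\<^sup>2"
    using proj_coeffs_pythagoras[OF proj, of a] by (simp only: R_def)
  also have "\<dots> \<le> 2 * C\<^sup>2 * R\<^sup>2 + 2 * C\<^sup>2 * (norm (\<Sum>k\<in>J. (c k - b k) *\<^sub>R h k))\<^sup>2"
    using \<open>R\<^sup>2 \<le> 2 * C\<^sup>2 * R\<^sup>2\<close> thresholded_coeff_error_riesz[OF h \<open>finite J\<close> \<open>card _ \<le> n\<close>]
    unfolding a_def by (rule add_mono)
  also have "\<dots> = 2 * C\<^sup>2 * (norm (u - (\<Sum>k\<in>J. b k *\<^sub>R h k)))\<^sup>2"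
    using proj_coeffs_pythagoras[OF proj, of b] by (simp only: R_def distrib_left)
  also have "\<dots> = (sqrt 2 * C * norm (u - (\<Sum>k\<in>J. b k *\<^sub>R h k)))\<^sup>2"
    by (simp add: power_mult_distrib)
  finally have "norm (u - (\<Sum>k\<in>J. a k *\<^sub>R h k)) \<le> sqrt 2 * C * norm (u - (\<Sum>k\<in>J. b k *\<^sub>R h k))"
    by (rule power2_le_imp_le) (use \<open>C \<ge> 1\<close> in simp)
  then show ?thesis
    by (simp add: a_def)
qed

section \<open>Manifold widths versus nonlinear widths\<close>

lemma n_term_sum_as_sparse_sum:
  fixes h :: "nat \<Rightarrow> 'a::real_vector"
  assumes "finite J" and "i ` {..<n} \<subseteq> J"
  shows "\<exists>b. card {j\<in>J. b j \<noteq> 0} \<le> n \<and> (\<Sum>k<n. c k *\<^sub>R h (i k)) = (\<Sum>j\<in>J. b j *\<^sub>R h j)"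
proof (intro exI conjI)
  define b where "b j = (\<Sum>k\<in>{k\<in>{..<n}. i k = j}. c k)" for j
  have "{j\<in>J. b j \<noteq> 0} \<subseteq> i ` {..<n}"
    by (auto simp: b_def elim: sum.not_neutral_contains_not_neutral)
  then show "card {j\<in>J. b j \<noteq> 0} \<le> n"
    using card_image_le[of "{..<n}" i] by (metis card_lessThan card_mono finite_imageI finite_lessThan le_trans)
  have "(\<Sum>j\<in>J. b j *\<^sub>R h j) = (\<Sum>j\<in>J. \<Sum>k\<in>{k\<in>{..<n}. i k = j}. c k *\<^sub>R h (i k))"
    by (auto simp: b_def scaleR_sum_left intro!: sum.cong)
  also have "\<dots> = (\<Sum>k<n. c k *\<^sub>R h (i k))"
    using assms by (intro sum.group) auto
  finally show "(\<Sum>k<n. c k *\<^sub>R h (i k)) = (\<Sum>j\<in>J. b j *\<^sub>R h j)" ..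
qed

lemma finite_dictionary_if_compact:
  fixes S :: "'g::real_normed_vector \<Rightarrow> 'h::real_normed_vector" and h :: "nat \<Rightarrow> 'h"
  assumes S: "bounded_linear S" and "compact (closure B)"
    and sigma: "\<And>f. f \<in> B \<Longrightarrow> sigma_n n h (S f) \<le> E" and "\<eta> > 0"
  obtains J where "finite J"
    "\<And>f. f \<in> B \<Longrightarrow> \<exists>b. card {k\<in>J. b k \<noteq> 0} \<le> n \<and> norm (S f - (\<Sum>k\<in>J. b k *\<^sub>R h k)) \<le> E + \<eta>"
proof -
  have "\<exists>c i. norm (S f - (\<Sum>k<n. c k *\<^sub>R h (i k))) < E + \<eta> / 2" if "f \<in> B" for f
    using cInf_lessD[of "{norm (S f - (\<Sum>k<n. c k *\<^sub>R h (i k))) | c i. True}" "E + \<eta> / 2"]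
      sigma[OF that] \<open>\<eta> > 0\<close> unfolding sigma_n_def by fastforce
  then obtain c i where ci: "\<And>f. f \<in> B \<Longrightarrow> norm (S f - (\<Sum>k<n. c f k *\<^sub>R h (i f k))) < E + \<eta> / 2"
    by metis
  define r where "r = \<eta> / (2 * (onorm S + 1))"
  have "r > 0" "onorm S * r < \<eta> / 2"
    using \<open>\<eta> > 0\<close> onorm_pos_le[OF S] by (simp_all add: r_def field_simps)
  have "closure B \<subseteq> (\<Union>f\<in>B. ball f r)"
    using \<open>r > 0\<close> by (force simp: closure_approachable dist_commute)
  then obtain T where "T \<subseteq> B" "finite T" and cover: "closure B \<subseteq> (\<Union>f\<in>T. ball f r)"
    using compactE_image[OF \<open>compact (closure B)\<close>] by (metis open_ball)
  define J where "J = (\<Union>f\<in>T. i f ` {..<n})"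
  have "finite J"
    using \<open>finite T\<close> by (simp add: J_def)
  moreover have "\<exists>b. card {k\<in>J. b k \<noteq> 0} \<le> n \<and> norm (S f - (\<Sum>k\<in>J. b k *\<^sub>R h k)) \<le> E + \<eta>"
    if "f \<in> B" for f
  proof -
    obtain f' where "f' \<in> T" "dist f f' < r"
      using cover closure_subset \<open>f \<in> B\<close> by (force simp: dist_commute)
    then have "norm (S f - S f') < \<eta> / 2"
      using onorm[OF S, of "f - f'"] \<open>onorm S * r < \<eta> / 2\<close> onorm_pos_le[OF S]
        mult_left_mono[of "norm (f - f')" r "onorm S"]
      by (simp add: dist_norm linear_diff[OF bounded_linear.linear[OF S]])
    moreover obtain b where "card {k\<in>J. b k \<noteq> 0} \<le> n"
      and b: "(\<Sum>k<n. c f' k *\<^sub>R h (i f' k)) = (\<Sum>k\<in>J. b k *\<^sub>R h k)"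
      using n_term_sum_as_sparse_sum[OF \<open>finite J\<close>, where i="i f'" and c="c f'" and h=h]
        \<open>f' \<in> T\<close> by (auto simp: J_def)
    moreover have "norm (S f' - (\<Sum>k\<in>J. b k *\<^sub>R h k)) < E + \<eta> / 2"
      using ci[of f'] \<open>f' \<in> T\<close> \<open>T \<subseteq> B\<close> b by auto
    ultimately show ?thesis
      using norm_triangle_ineq[of "S f - S f'" "S f' - (\<Sum>k\<in>J. b k *\<^sub>R h k)"] by force
  qed
  ultimately show thesis
    using that by blast
qed

lemma sparse_lipschitz_coeffs_exist:
  fixes S :: "'g::real_normed_vector \<Rightarrow> 'h::real_inner" and h :: "nat \<Rightarrow> 'h"
  assumes S: "bounded_linear S" and h: "is_riesz_basis h" "riesz_B h \<le> C * riesz_A h" and "C \<ge> 1"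
    and "finite J"
    and near: "\<And>f. f \<in> B \<Longrightarrow> \<exists>b. card {k\<in>J. b k \<noteq> 0} \<le> n \<and> norm (S f - (\<Sum>k\<in>J. b k *\<^sub>R h k)) \<le> R"
  obtains a L where "\<And>f. {k. a f k \<noteq> 0} \<subseteq> J" "\<And>f. card {k. a f k \<noteq> 0} \<le> 2 * n"
    "L \<ge> 0" "\<And>f f' k. \<bar>a f k - a f' k\<bar> \<le> L * norm (f - f')"
    "\<And>f. f \<in> B \<Longrightarrow> norm (S f - (\<Sum>k\<in>J. a f k *\<^sub>R h k)) \<le> sqrt 2 * C * R"
proof -
  obtain c where c: "\<And>u. is_proj_coeffs h J u (c u)"
    using proj_coeffs_exist[OF \<open>finite J\<close>] by metis
  define a where "a f = thresholded J (2 * n) (c (S f))" for f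
  define A where "A = riesz_A h"
  have "A > 0"
    using h by (simp add: A_def is_riesz_basis_def)
  have lip: "\<bar>a f k - a f' k\<bar> \<le> (4 * onorm S / A) * norm (f - f')" for f f' k
  proof -
    have "A * L2_set (\<lambda>k. c (S f) k - c (S f') k) J \<le> norm (\<Sum>k\<in>J. (c (S f) k - c (S f') k) *\<^sub>R h k)"
      unfolding A_def using riesz_lower_bound[OF \<open>finite J\<close>] .
    also have "\<dots> \<le> norm (S f - S f')"
      using proj_coeffs_nonexpansive[OF c c] .
    also have "\<dots> \<le> onorm S * norm (f - f')"
      using onorm[OF S, of "f - f'"] by (simp add: linear_diff[OF bounded_linear.linear[OF S]])
    finally have "L2_set (\<lambda>k. c (S f) k - c (S f') k) J \<le> onorm S * norm (f - f') / A"
      using \<open>A > 0\<close> by (simp add: pos_le_divide_eq mult.commute)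
    then show ?thesis
      using thresholded_lipschitz[OF \<open>finite J\<close>, of "2 * n" "c (S f)" k "c (S f')"]
      by (simp add: a_def)
  qed
  have err: "norm (S f - (\<Sum>k\<in>J. a f k *\<^sub>R h k)) \<le> sqrt 2 * C * R" if "f \<in> B" for f
  proof -
    obtain b where "card {k\<in>J. b k \<noteq> 0} \<le> n" "norm (S f - (\<Sum>k\<in>J. b k *\<^sub>R h k)) \<le> R"
      using near \<open>f \<in> B\<close> by blast
    then show ?thesis
      using thresholded_approx[OF h \<open>C \<ge> 1\<close> \<open>finite J\<close> c] \<open>C \<ge> 1\<close>
      by (fastforce simp: a_def intro: order_trans)
  qed
  have "{k. a f k \<noteq> 0} \<subseteq> J" "card {k. a f k \<noteq> 0} \<le> 2 * n" for f
    using support_thresholded[OF \<open>finite J\<close>] card_support_thresholded[OF \<open>finite J\<close>]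
    by (auto simp: a_def)
  moreover have "4 * onorm S / A \<ge> 0"
    using onorm_pos_le[OF S] \<open>A > 0\<close> by simp
  ultimately show thesis
    using that[of a "4 * onorm S / A"] lip err by blast
qed

lemma e_cont_le_if_sigma_n_le:
  fixes S :: "'g::real_normed_vector \<Rightarrow> 'h::real_inner" and h :: "nat \<Rightarrow> 'h"
  assumes S: "bounded_linear S" and qn: "is_quasinormed_subspace F qn"
    and "compact_embedding F qn" and "C \<ge> 1" and "h \<in> riesz_bases_C C"
    and sigma: "\<And>f. f \<in> unit_ball_F F qn \<Longrightarrow> sigma_n n h (S f) \<le> E" and "\<eta> > 0"
  shows "e_cont (4 * n + 1) S F qn \<le> ereal (sqrt 2 * C * (E + \<eta>))"
proof -
  have h: "is_riesz_basis h" "riesz_B h \<le> C * riesz_A h"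
    using \<open>h \<in> riesz_bases_C C\<close>
    by (auto simp: riesz_bases_C_def is_riesz_basis_def pos_divide_le_eq)
  have compact: "compact (closure (unit_ball_F F qn))"
    using \<open>compact_embedding F qn\<close> by (simp add: compact_embedding_def)
  then have "bounded (unit_ball_F F qn)"
    by (meson bounded_subset closure_subset compact_imp_bounded)
  obtain J where "finite J" and near: "\<And>f. f \<in> unit_ball_F F qn \<Longrightarrow>
      \<exists>b. card {k\<in>J. b k \<noteq> 0} \<le> n \<and> norm (S f - (\<Sum>k\<in>J. b k *\<^sub>R h k)) \<le> E + \<eta>"
    using finite_dictionary_if_compact[OF S compact sigma \<open>\<eta> > 0\<close>] by blast
  obtain a L where "\<And>f. {k. a f k \<noteq> 0} \<subseteq> J" "\<And>f. card {k. a f k \<noteq> 0} \<le> 2 * n"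
    "L \<ge> 0" "\<And>f f' k. \<bar>a f k - a f' k\<bar> \<le> L * norm (f - f')"
    "\<And>f. f \<in> unit_ball_F F qn \<Longrightarrow> norm (S f - (\<Sum>k\<in>J. a f k *\<^sub>R h k)) \<le> sqrt 2 * C * (E + \<eta>)"
    using sparse_lipschitz_coeffs_exist[OF S h \<open>C \<ge> 1\<close> \<open>finite J\<close> near] by blast
  then show ?thesis
    using e_cont_le_if_sparse_lipschitz_coeffs[OF qn \<open>bounded _\<close> \<open>finite J\<close>] by blast
qed

lemma sigma_n_nonneg: "sigma_n n h u \<ge> 0"
  unfolding sigma_n_def by (rule cInf_greatest) auto

lemma e_non_nonneg:
  assumes "is_quasinormed_subspace F qn"
  shows "e_non n C S F qn \<ge> 0"
  unfolding e_non_def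
  using zero_in_unit_ball_F[OF assms]
  by (intro INF_greatest order_trans[OF _ SUP_upper]) (auto simp: sigma_n_nonneg)

lemma e_cont_le_sqrt2_e_non:
  fixes S :: "'g::real_normed_vector \<Rightarrow> 'h::real_inner"
  assumes S: "bounded_linear S" and qn: "is_quasinormed_subspace F qn"
    and "compact_embedding F qn" and "C \<ge> 1"
  shows "e_cont (4 * n + 1) S F qn \<le> ereal (sqrt 2 * C) * e_non n C S F qn"
proof (cases "e_non n C S F qn")
  case (real En)
  show ?thesis
  proof (rule ereal_le_epsilon2)
    fix d :: real assume "d > 0"
    define \<eta> where "\<eta> = d / (2 * sqrt 2 * C)"
    have "\<eta> > 0"
      using \<open>d > 0\<close> \<open>C \<ge> 1\<close> by (simp add: \<eta>_def)
    then have "e_non n C S F qn < ereal (En + \<eta>)"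
      using real by simp
    then obtain h where "h \<in> riesz_bases_C C"
      and sup_less: "(SUP f\<in>unit_ball_F F qn. ereal (sigma_n n h (S f))) < ereal (En + \<eta>)"
      unfolding e_non_def INF_less_iff by blast
    have "sigma_n n h (S f) \<le> En + \<eta>" if "f \<in> unit_ball_F F qn" for f
    proof -
      have "ereal (sigma_n n h (S f)) < ereal (En + \<eta>)"
        using SUP_upper[OF that] sup_less by (rule le_less_trans)
      then show ?thesis
        by simp
    qed
    then have "e_cont (4 * n + 1) S F qn \<le> ereal (sqrt 2 * C * ((En + \<eta>) + \<eta>))"
      using e_cont_le_if_sigma_n_le[OF S qn assms(3,4) \<open>h \<in> riesz_bases_C C\<close> _ \<open>\<eta> > 0\<close>] by blast
    also have "sqrt 2 * C * ((En + \<eta>) + \<eta>) = sqrt 2 * C * En + d"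
      using \<open>C \<ge> 1\<close> by (simp add: \<eta>_def algebra_simps)
    finally show "e_cont (4 * n + 1) S F qn \<le> ereal (sqrt 2 * C) * e_non n C S F qn + ereal d"
      by (simp add: real)
  qed
next
  case PInf
  then show ?thesis
    using \<open>C \<ge> 1\<close> by simp
next
  case MInf
  then show ?thesis
    using e_non_nonneg[OF qn, of n C S] by simp
qed

theorem theorem1:
  fixes S :: "'g::{real_inner,complete_space} \<Rightarrow> 'h::{real_inner,complete_space}"
    and F :: "'g set" and qn :: "'g \<Rightarrow> real"
    and C :: real and n :: nat
  assumes "bounded_linear S" and "bij S"
    and "is_quasinormed_subspace F qn"
    and "compact_embedding F qn"
    and "C \<ge> 1"
  shows "e_cont (4 * n + 1) S F qn
     \<le> ereal (2 * C * (onorm S)\<^sup>2 * (onorm (inv S))\<^sup>2) * e_non n C S F qn"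
proof (cases "\<exists>x::'g. x \<noteq> 0")
  case True
  then have "1 \<le> (onorm S * onorm (inv S))\<^sup>2"
    using onorm_mult_onorm_inv_ge_1[OF assms(1,2)] by (auto simp: one_le_power)
  moreover have "sqrt 2 \<le> 2"
    using real_sqrt_le_mono[of 2 4] by simp
  ultimately have "sqrt 2 * C \<le> 2 * C * (onorm S)\<^sup>2 * (onorm (inv S))\<^sup>2"
    using \<open>C \<ge> 1\<close> mult_left_mono[of 1 "(onorm S * onorm (inv S))\<^sup>2" "2 * C"]
    by (simp add: power_mult_distrib mult.assoc)
  then show ?thesis
    using e_cont_le_sqrt2_e_non[OF assms(1,3,4,5)] e_non_nonneg[OF assms(3)]
    by (meson ereal_less_eq(3) ereal_mult_right_mono order_trans)
next
  case False
  then have "S f = 0" for f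
    using linear_0[OF bounded_linear.linear[OF assms(1)]] by metis
  then have "e_cont (4 * n + 1) S F qn \<le> ereal 0"
    by (intro e_cont_le[where N="\<lambda>_ _. 0" and \<phi>="\<lambda>_. 0"] cont_F_Rm_if_lipschitz[of 0]
        cont_Rm_H_if_lipschitz[of 0]) (auto simp: Rvecs_def)
  also have "\<dots> \<le> ereal (2 * C * (onorm S)\<^sup>2 * (onorm (inv S))\<^sup>2) * e_non n C S F qn"
    using \<open>C \<ge> 1\<close> by (simp add: zero_ereal_def[symmetric] ereal_0_le_mult e_non_nonneg[OF assms(3)])
  finally show ?thesis .
qed

end
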